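(* Let $P$ be a weighted combinatorial optimization problem and let $(T_S)_{S \in P}$ be the decision trees (with continuous branching functions) of a deterministic algorithm $A$ for $P$. Then for every instance $(S,w)$, $S=(n,W,L,\mathrm{cost})$, there exists a function $h : \mathbb{R} \to Q^n$ with the following properties: - $h(0)=0$ and $h$ is continuous at $0$; - $W$ continues into direction $h$ at $w$; - every branching function of $T_S$ is decreasing, constant, or increasing into direction $h$ at $w$. Consequently, breaking every tie $v_u(w)=0$ by taking the left child iff $v_u$ is decreasing into direction $h$ at $w$ defines a tie-breaking policy under which $A$ uses symbolic perturbation. That is, every deterministic algorithm admits a symbolic perturbation tie-breaking policy.
   Context: Let $Q$ be a subfield of $\mathbb{R}$ (e.g. $\mathbb{R}$, $\mathbb{Q}$, or the real algebraic numbers). Equip $Q^n$ with the Euclidean metric $d$. For $x \in Q^n$ and $\epsilon>0$, the $\epsilon$-neighborhood of $x$ is $\{y \in Q^n \mid d(x,y)<\epsilon\}$. A neighborhood of $x$ is an $\epsilon$-neighborhood of $x$ for some $\epsilon>0$. A set $U \subseteq Q^n$ is open if it contains a neighborhood of each of its points. A set $X \subseteq Q^n$ is semi-open if for every $x \in X$ and every neighborhood $N$ of $x$ there is a non-empty open set $U \subseteq Q^n$ with $U \subseteq N \cap X$. For $x \in \mathbb{R}$, $\mathrm{sgn}(x) = x/|x|$ if $x \neq 0$ and $\mathrm{sgn}(0)=0$. Problems: A weighted combinatorial optimization (minimization) problem $P$ is a set of problem structures; each structure $S=(n,W,L,\mathrm{cost})$ consists of a positive integer $n$, a semi-open set $W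 \subseteq Q^n$ of admissible weight vectors, a finite non-empty set $L$ of feasible solutions, and a function $\mathrm{cost} : W \times L \to \mathbb{R}$ such that $\mathrm{cost}(\cdot,l)$ is continuous on $W$ for every $l \in L$. An instance is a pair $(S,w)$ with $S \in P$ and $w \in W$. Algorithms: A deterministic algorithm $A$ for $P$ assigns to each structure $S=(n,W,L,\mathrm{cost}) \in P$ a finite rooted binary decision tree $T_S$. Each leaf is labelled with an element of $L \cup \{l_f\}$, where $l_f \notin L$ is a special symbol representing failure. Each internal node $u$ is labelled with a continuous branching function $v_u : W \to Q$. On input $(S,w)$, $A$ starts at the root of $T_S$. At an internal node $u$ it moves to the left child if $v_u(w)<0$ and to the right child if $v_u(w)>0$. If $v_u(w)=0$ (a tie), it moves to the left or right child according to a deterministic tie-breaking policy, i.e. a rule fixing, for every instance $(S,w)$ and every internal node $u$ with $v_u(w)=0$, which child is taken. $A$ returns the label $A(S,w)$ of the leaf reached. Directions: Let $W \subseteq Q^n$ be semi-open, $w \in W$, and $h : \mathbb{R} \to Q^n$ with $h(0)=0$ and $h$ continuous at $0$. $W$ continues into direction $h$ at $w$ if there is $\delta>0$ such that for every $0<a<\delta$ some neighborhood of $w+h(a)$ is contained in $W$. If $W$ continues into direction $h$ at $w$ and $f : W \to Q$ is continuous, then $f$ is increasing (resp. constant, decreasing) into direction $h$ at $w$ if the following holds: there is $\delta>0$ such that for every $0<a<\delta$ there is a neighborhood $N_a \subseteq W$ of $w+h(a)$ with $\mathrm{sgn}(f(y)-f(w)) = 1$ (resp. $0$, $-1$) for all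 $y \in N_a$. Symbolic perturbation: $A$ uses symbolic perturbation if, for every instance $(S,w)$ with $S=(n,W,L,\mathrm{cost})$, there exists a function $h_{S,w} : \mathbb{R} \to Q^n$ satisfying all of the following: - $h_{S,w}(0)=0$ and $h_{S,w}$ is continuous at $0$; - $W$ continues into direction $h_{S,w}$ at $w$; - every branching function of $T_S$ is decreasing, constant, or increasing into direction $h_{S,w}$ at $w$; - whenever a tie $v_u(w)=0$ occurs at an internal node $u$ on input $(S,w)$, $A$ takes the left child if $v_u$ is decreasing into direction $h_{S,w}$ at $w$, and the right child otherwise. *)

theory Defs
  imports Complex_Main
begin

text \<open>Points of Q^n are represented as functions nat \<Rightarrow> real whose first n
  coordinates lie in Q and whose remaining coordinates are 0.\<close>

type_synonym vec = "nat \<Rightarrow> real"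

definition subfield_real :: "real set \<Rightarrow> bool" where
  "subfield_real Q \<longleftrightarrow> 0 \<in> Q \<and> 1 \<in> Q \<and>
     (\<forall>x\<in>Q. \<forall>y\<in>Q. x + y \<in> Q \<and> x * y \<in> Q) \<and>
     (\<forall>x\<in>Q. - x \<in> Q) \<and> (\<forall>x\<in>Q. x \<noteq> 0 \<longrightarrow> inverse x \<in> Q)"

definition Qvec :: "real set \<Rightarrow> nat \<Rightarrow> vec set" where
  "Qvec Q n = {x. (\<forall>i<n. x i \<in> Q) \<and> (\<forall>i\<ge>n. x i = 0)}"

definition vdist :: "nat \<Rightarrow> vec \<Rightarrow> vec \<Rightarrow> real" where
  "vdist n x y = sqrt (\<Sum>i<n. (x i - y i)\<^sup>2)"

definition vadd :: "vec \<Rightarrow> vec \<Rightarrow> vec" where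
  "vadd x y = (\<lambda>i. x i + y i)"

definition nbhd :: "real set \<Rightarrow> nat \<Rightarrow> vec \<Rightarrow> real \<Rightarrow> vec set" where
  "nbhd Q n x e = {y \<in> Qvec Q n. vdist n x y < e}"

definition openQ :: "real set \<Rightarrow> nat \<Rightarrow> vec set \<Rightarrow> bool" where
  "openQ Q n U \<longleftrightarrow> U \<subseteq> Qvec Q n \<and> (\<forall>x\<in>U. \<exists>e>0. nbhd Q n x e \<subseteq> U)"

definition semi_open :: "real set \<Rightarrow> nat \<Rightarrow> vec set \<Rightarrow> bool" where
  "semi_open Q n X \<longleftrightarrow> X \<subseteq> Qvec Q n \<and>
     (\<forall>x\<in>X. \<forall>e>0. \<exists>U. U \<noteq> {} \<and> openQ Q n U \<and> U \<subseteq> nbhd Q n x e \<inter> X)"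

definition contW :: "nat \<Rightarrow> vec set \<Rightarrow> (vec \<Rightarrow> real) \<Rightarrow> bool" where
  "contW n W f \<longleftrightarrow> (\<forall>x\<in>W. \<forall>e>0. \<exists>d>0. \<forall>y\<in>W. vdist n x y < d \<longrightarrow> \<bar>f y - f x\<bar> < e)"

record 'l pstruct =
  dim :: nat
  wts :: "vec set"
  sols :: "'l set"
  cost :: "vec \<Rightarrow> 'l \<Rightarrow> real"

definition structure_ok :: "real set \<Rightarrow> 'l pstruct \<Rightarrow> bool" where
  "structure_ok Q S \<longleftrightarrow> dim S > 0 \<and> semi_open Q (dim S) (wts S) \<and>
     finite (sols S) \<and> sols S \<noteq> {} \<and>
     (\<forall>l\<in>sols S. contW (dim S) (wts S) (\<lambda>w. cost S w l))"

definition wcop :: "real set \<Rightarrow> 'l pstruct set \<Rightarrow> bool" where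
  "wcop Q P \<longleftrightarrow> (\<forall>S\<in>P. structure_ok Q S)"

text \<open>Finite rooted binary decision trees; a leaf labelled None is the failure symbol.\<close>
datatype 'l dtree = Leaf "'l option" | Node "vec \<Rightarrow> real" "'l dtree" "'l dtree"

fun leaf_labels :: "'l dtree \<Rightarrow> 'l option set" where
  "leaf_labels (Leaf x) = {x}"
| "leaf_labels (Node v l r) = leaf_labels l \<union> leaf_labels r"

fun branchfuns :: "'l dtree \<Rightarrow> (vec \<Rightarrow> real) set" where
  "branchfuns (Leaf x) = {}"
| "branchfuns (Node v l r) = insert v (branchfuns l \<union> branchfuns r)"

definition tree_ok :: "real set \<Rightarrow> 'l pstruct \<Rightarrow> 'l dtree \<Rightarrow> bool" where
  "tree_ok Q S T \<longleftrightarrow> (\<forall>x\<in>leaf_labels T. \<forall>l. x = Some l \<longrightarrow> l \<in> sols S) \<and>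
     (\<forall>v\<in>branchfuns T. (\<forall>w\<in>wts S. v w \<in> Q) \<and> contW (dim S) (wts S) v)"

definition det_alg :: "real set \<Rightarrow> 'l pstruct set \<Rightarrow> ('l pstruct \<Rightarrow> 'l dtree) \<Rightarrow> bool" where
  "det_alg Q P A \<longleftrightarrow> (\<forall>S\<in>P. tree_ok Q S (A S))"

text \<open>Tie-breaking policy: for a structure, a weight vector and an internal node
  (identified by its position, the list of moves from the root, True = left),
  True means "take the left child".\<close>
type_synonym 'l policy = "'l pstruct \<Rightarrow> vec \<Rightarrow> bool list \<Rightarrow> bool"

definition direction_ok :: "real set \<Rightarrow> nat \<Rightarrow> (real \<Rightarrow> vec) \<Rightarrow> bool" where
  "direction_ok Q n h \<longleftrightarrow> (\<forall>a. h a \<in> Qvec Q n) \<and> h 0 = (\<lambda>_. 0) \<and>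
     (\<forall>e>0. \<exists>d>0. \<forall>a. \<bar>a\<bar> < d \<longrightarrow> vdist n (h a) (h 0) < e)"

definition continues_into :: "real set \<Rightarrow> nat \<Rightarrow> vec set \<Rightarrow> (real \<Rightarrow> vec) \<Rightarrow> vec \<Rightarrow> bool" where
  "continues_into Q n W h w \<longleftrightarrow>
     (\<exists>d>0. \<forall>a. 0 < a \<and> a < d \<longrightarrow> (\<exists>e>0. nbhd Q n (vadd w (h a)) e \<subseteq> W))"

definition moves_into :: "real \<Rightarrow> real set \<Rightarrow> nat \<Rightarrow> vec set \<Rightarrow> (vec \<Rightarrow> real) \<Rightarrow> (real \<Rightarrow> vec) \<Rightarrow> vec \<Rightarrow> bool" where
  "moves_into s Q n W f h w \<longleftrightarrow>
     (\<exists>d>0. \<forall>a. 0 < a \<and> a < d \<longrightarrow>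
        (\<exists>e>0. nbhd Q n (vadd w (h a)) e \<subseteq> W \<and>
               (\<forall>y\<in>nbhd Q n (vadd w (h a)) e. sgn (f y - f w) = s)))"

definition increasing_into where "increasing_into = moves_into 1"
definition constant_into where "constant_into = moves_into 0"
definition decreasing_into where "decreasing_into = moves_into (-1)"

definition good_direction :: "real set \<Rightarrow> 'l pstruct \<Rightarrow> 'l dtree \<Rightarrow> vec \<Rightarrow> (real \<Rightarrow> vec) \<Rightarrow> bool" where
  "good_direction Q S T w h \<longleftrightarrow> direction_ok Q (dim S) h \<and>
     continues_into Q (dim S) (wts S) h w \<and>
     (\<forall>v\<in>branchfuns T. decreasing_into Q (dim S) (wts S) v h w \<or>
        constant_into Q (dim S) (wts S) v h w \<or> increasing_into Q (dim S) (wts S) v h w)"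

fun ties_follow :: "real set \<Rightarrow> 'l pstruct \<Rightarrow> 'l policy \<Rightarrow> vec \<Rightarrow> (real \<Rightarrow> vec)
                    \<Rightarrow> bool list \<Rightarrow> 'l dtree \<Rightarrow> bool" where
  "ties_follow Q S tb w h pos (Leaf x) = True"
| "ties_follow Q S tb w h pos (Node v l r) =
     ((v w = 0 \<longrightarrow> (tb S w pos \<longleftrightarrow> decreasing_into Q (dim S) (wts S) v h w)) \<and>
      (if v w < 0 \<or> (v w = 0 \<and> tb S w pos)
       then ties_follow Q S tb w h (pos @ [True]) l
       else ties_follow Q S tb w h (pos @ [False]) r))"

definition uses_symbolic_perturbation ::
  "real set \<Rightarrow> 'l pstruct set \<Rightarrow> ('l pstruct \<Rightarrow> 'l dtree) \<Rightarrow> 'l policy \<Rightarrow> bool" where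
  "uses_symbolic_perturbation Q P A tb \<longleftrightarrow>
     (\<forall>S\<in>P. \<forall>w\<in>wts S. \<exists>h. good_direction Q S (A S) w h \<and> ties_follow Q S tb w h [] (A S))"

end

theory Submission
  imports Defs "HOL-Analysis.L2_Norm" "HOL-Library.FuncSet"
begin

text \<open>
  Fix an instance (S, w) and let F be the finite set of branching
  functions of the tree.  Since W is semi-open, every neighbourhood of w contains a
  non-empty open subset of W; by continuity this set can be shrunk so that every
  f in F has constant sign of f - f(w) on it.  Doing this for the radii 1/(k+1)
  gives open sets U_k converging to w with points x_k in them.  There are only
  finitely many sign patterns, so one pattern occurs for infinitely many k.  The
  direction h(a) = x_k - w, with k from this infinite set and 1/(k+1) <= a, tends
  to 0, W continues into it, and every f in F has the same sign behaviour along it.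
  The tie-breaking policy "left iff decreasing into h" then satisfies the
  symbolic-perturbation condition on the path by a structural induction on the tree.
\<close>

section \<open>The Euclidean metric on Q^n\<close>

lemma vdist_triangle: "vdist n x z \<le> vdist n x y + vdist n y z"
proof -
  have "vdist n x z = L2_set (\<lambda>i. (x i - y i) + (y i - z i)) {..<n}"
    by (simp add: vdist_def L2_set_def)
  also have "\<dots> \<le> L2_set (\<lambda>i. x i - y i) {..<n} + L2_set (\<lambda>i. y i - z i) {..<n}"
    by (rule L2_set_triangle_ineq)
  finally show ?thesis by (simp add: vdist_def L2_set_def)
qed

lemma openQ_nbhd: "openQ Q n (nbhd Q n x e)"
  unfolding openQ_def
proof (intro conjI ballI)
  show "nbhd Q n x e \<subseteq> Qvec Q n" by (auto simp: nbhd_def)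
  fix y assume "y \<in> nbhd Q n x e"
  hence "vdist n x y < e" by (simp add: nbhd_def)
  moreover have "nbhd Q n y (e - vdist n x y) \<subseteq> nbhd Q n x e"
    by (auto simp: nbhd_def intro: le_less_trans[OF vdist_triangle[of n x _ y]])
  ultimately show "\<exists>e'>0. nbhd Q n y e' \<subseteq> nbhd Q n x e"
    by (intro exI[of _ "e - vdist n x y"]) auto
qed

lemma Qvec_diff:
  assumes "subfield_real Q" "x \<in> Qvec Q n" "w \<in> Qvec Q n"
  shows "(\<lambda>i. x i - w i) \<in> Qvec Q n"
proof -
  have "x i + - w i \<in> Q" if "i < n" for i
    using assms that unfolding subfield_real_def Qvec_def by blast
  thus ?thesis using assms(2,3) unfolding Qvec_def by simp
qed

section \<open>Refining open sets to constant signs\<close>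

definition sign_uniform :: "(vec \<Rightarrow> real) \<Rightarrow> real \<Rightarrow> vec set \<Rightarrow> bool" where
  "sign_uniform f c U \<longleftrightarrow> (\<forall>x\<in>U. \<forall>y\<in>U. sgn (f y - c) = sgn (f x - c))"

lemma sign_uniform_subset: "sign_uniform f c U \<Longrightarrow> V \<subseteq> U \<Longrightarrow> sign_uniform f c V"
  unfolding sign_uniform_def by blast

lemma sgn_eq_if_close:
  fixes a b :: real
  assumes "\<bar>b - a\<bar> < \<bar>a\<bar>"
  shows "sgn b = sgn a"
  using assms by (auto simp: sgn_if split: if_splits)

text \<open>A continuous function either equals c on U, or is bounded away from c near some
  point of U; in both cases a non-empty open subset of U with uniform sign exists.\<close>
lemma open_refine_sign:
  assumes "openQ Q n U" "U \<noteq> {}" "U \<subseteq> W" "contW n W f"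
  shows "\<exists>U'. U' \<noteq> {} \<and> openQ Q n U' \<and> U' \<subseteq> U \<and> sign_uniform f c U'"
proof (cases "\<forall>y\<in>U. f y = c")
  case True
  thus ?thesis using assms by (intro exI[of _ U]) (auto simp: sign_uniform_def)
next
  case False
  then obtain x where x: "x \<in> U" "f x \<noteq> c" by auto
  have "\<forall>e>0. \<exists>d>0. \<forall>y\<in>W. vdist n x y < d \<longrightarrow> \<bar>f y - f x\<bar> < e"
    using assms(3,4) x(1) unfolding contW_def by blast
  moreover have "\<bar>f x - c\<bar> > 0" using x by simp
  ultimately obtain d where d: "d > 0" "\<forall>y\<in>W. vdist n x y < d \<longrightarrow> \<bar>f y - f x\<bar> < \<bar>f x - c\<bar>"
    by blast
  obtain e where e: "e > 0" "nbhd Q n x e \<subseteq> U"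
    using assms(1) x(1) unfolding openQ_def by blast
  define U' where "U' = nbhd Q n x (min d e)"
  have "x \<in> Qvec Q n" using assms(1) x(1) unfolding openQ_def by blast
  hence "x \<in> U'" using d e by (simp add: U'_def nbhd_def vdist_def)
  moreover have sub: "U' \<subseteq> U" using e by (auto simp: U'_def nbhd_def)
  moreover have "sgn (f y - c) = sgn (f x - c)" if "y \<in> U'" for y
  proof (rule sgn_eq_if_close)
    have "y \<in> W" "vdist n x y < d" using that sub assms(3) by (auto simp: U'_def nbhd_def)
    thus "\<bar>(f y - c) - (f x - c)\<bar> < \<bar>f x - c\<bar>" using d by simp
  qed
  ultimately show ?thesis
    unfolding sign_uniform_def by (metis empty_iff openQ_nbhd U'_def)
qed

lemma open_refine_signs:
  assumes "finite F" "\<forall>f\<in>F. contW n W f" "openQ Q n U" "U \<noteq> {}" "U \<subseteq> W"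
  shows "\<exists>U'. U' \<noteq> {} \<and> openQ Q n U' \<and> U' \<subseteq> U \<and> (\<forall>f\<in>F. sign_uniform f (c f) U')"
  using assms
proof (induction F arbitrary: U rule: finite_induct)
  case empty
  thus ?case by (intro exI[of _ U]) simp
next
  case (insert g F)
  have "\<forall>f\<in>F. contW n W f" "contW n W g" using insert.prems(1) by simp_all
  with insert.IH insert.prems(2-4)
  obtain U1 where U1: "U1 \<noteq> {}" "openQ Q n U1" "U1 \<subseteq> U" "\<forall>f\<in>F. sign_uniform f (c f) U1"
    by meson
  have "U1 \<subseteq> W" using U1(3) insert.prems(4) by (rule subset_trans)
  then obtain U2 where U2: "U2 \<noteq> {}" "openQ Q n U2" "U2 \<subseteq> U1" "sign_uniform g (c g) U2"
    using open_refine_sign[OF U1(2,1) _ \<open>contW n W g\<close>] by meson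
  have "\<forall>f\<in>insert g F. sign_uniform f (c f) U2"
    using U1(4) U2(3,4) sign_uniform_subset by blast
  thus ?case using U1(3) U2(1-3) by (intro exI[of _ U2]) simp
qed

lemma semi_open_sign_uniform_near:
  assumes "semi_open Q n W" "w \<in> W" "finite F" "\<forall>f\<in>F. contW n W f" "e > 0"
  shows "\<exists>U. U \<noteq> {} \<and> openQ Q n U \<and> U \<subseteq> nbhd Q n w e \<inter> W \<and> (\<forall>f\<in>F. sign_uniform f (f w) U)"
proof -
  have "\<forall>x\<in>W. \<forall>e>0. \<exists>U. U \<noteq> {} \<and> openQ Q n U \<and> U \<subseteq> nbhd Q n x e \<inter> W"
    using assms(1) unfolding semi_open_def by (rule conjunct2)
  then obtain U0 where U0: "U0 \<noteq> {}" "openQ Q n U0" "U0 \<subseteq> nbhd Q n w e \<inter> W"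
    using assms(2,5) by meson
  have "U0 \<subseteq> W" using U0(3) by simp
  then obtain U where "U \<noteq> {}" "openQ Q n U" "U \<subseteq> U0" "\<forall>f\<in>F. sign_uniform f (f w) U"
    using open_refine_signs[OF assms(3,4) U0(2,1)] by meson
  thus ?thesis using U0(3) by (meson subset_trans)
qed

lemma sign_uniform_sequence:
  assumes "semi_open Q n W" "w \<in> W" "finite F" "\<forall>f\<in>F. contW n W f"
  obtains U where "\<And>k. U k \<noteq> {}" "\<And>k. openQ Q n (U k)"
    "\<And>k. U k \<subseteq> nbhd Q n w (1 / real (Suc k)) \<inter> W" "\<And>k. \<forall>f\<in>F. sign_uniform f (f w) (U k)"
proof -
  have "\<forall>k. \<exists>U. U \<noteq> {} \<and> openQ Q n U \<and> U \<subseteq> nbhd Q n w (1 / real (Suc k)) \<inter> W \<and>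
               (\<forall>f\<in>F. sign_uniform f (f w) U)"
    using semi_open_sign_uniform_near[OF assms] by simp
  then obtain U where "\<forall>k. U k \<noteq> {} \<and> openQ Q n (U k) \<and> U k \<subseteq> nbhd Q n w (1 / real (Suc k)) \<inter> W \<and>
               (\<forall>f\<in>F. sign_uniform f (f w) (U k))"
    by (rule choice[THEN exE])
  thus ?thesis using that by blast
qed

section \<open>Pigeonhole and the perturbation direction\<close>

lemma infinite_recurring_pattern:
  fixes p :: "nat \<Rightarrow> 'a \<Rightarrow> 'b"
  assumes "finite F" "finite V" "\<And>k f. p k f \<in> V"
  shows "\<exists>k0. infinite {k. \<forall>f\<in>F. p k f = p k0 f}"
proof -
  define pat where "pat k = restrict (p k) F" for k
  have "range pat \<subseteq> PiE F (\<lambda>_. V)" using assms(3) by (auto simp: pat_def)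
  hence "finite (range pat)" using assms(1,2) by (meson finite_PiE finite_subset)
  then obtain k0 where "infinite {k. pat k = pat k0}"
    using pigeonhole_infinite[OF infinite_UNIV_nat] by auto
  moreover have "pat k = pat k0 \<longleftrightarrow> (\<forall>f\<in>F. p k f = p k0 f)" for k
    unfolding pat_def by (auto simp: restrict_def fun_eq_iff)
  ultimately show ?thesis by auto
qed

lemma infinite_small_radius:
  assumes "infinite (K :: nat set)" "a > 0"
  shows "\<exists>k. k \<in> K \<and> 1 / real (Suc k) \<le> a"
proof -
  obtain k where k: "k \<in> K" "nat \<lceil>1 / a\<rceil> \<le> k"
    using assms(1) by (meson finite_nat_set_iff_bounded_le nle_le)
  hence "1 / a \<le> real (Suc k)" by linarith
  thus ?thesis using k(1) assms(2) by (auto simp: field_simps)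
qed

lemma direction_towards_points:
  assumes Q: "subfield_real Q" and w: "w \<in> Qvec Q n"
    and x: "\<And>a. a > 0 \<Longrightarrow> x a \<in> Qvec Q n" "\<And>a. a > 0 \<Longrightarrow> vdist n w (x a) < a"
  defines "h \<equiv> \<lambda>a. if a \<le> 0 then (\<lambda>_. 0) else (\<lambda>i. x a i - w i)"
  shows "direction_ok Q n h" and "\<And>a. a > 0 \<Longrightarrow> vadd w (h a) = x a"
proof -
  have small: "vdist n (h a) (h 0) < a" if "a > 0" for a
    using x(2)[OF that] that by (simp add: h_def vdist_def power2_commute)
  have close: "vdist n (h a) (h 0) < e" if "\<bar>a\<bar> < e" "e > 0" for a e :: real
    using small[of a] that by (cases "a > 0") (auto simp: h_def vdist_def)
  show "direction_ok Q n h"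
    unfolding direction_ok_def
  proof (intro conjI allI impI)
    show "h a \<in> Qvec Q n" for a
      using Qvec_diff[OF Q x(1) w] Q by (auto simp: h_def Qvec_def subfield_real_def)
    show "h 0 = (\<lambda>_. 0)" by (simp add: h_def)
    show "\<exists>d>0. \<forall>a. \<bar>a\<bar> < d \<longrightarrow> vdist n (h a) (h 0) < e" if "e > 0" for e :: real
      using close that by blast
  qed
  show "vadd w (h a) = x a" if "a > 0" for a
    using that by (simp add: h_def vadd_def)
qed

lemma sign_behaviour_into_direction:
  assumes nb: "\<And>a. a > 0 \<Longrightarrow> \<exists>e>0. nbhd Q n (vadd w (h a)) e \<subseteq> W \<and>
              (\<forall>y\<in>nbhd Q n (vadd w (h a)) e. \<forall>v\<in>F. sgn (v y - v w) = s v)"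
    and s: "\<forall>v\<in>F. s v \<in> {-1, 0, 1}"
  shows "continues_into Q n W h w"
    and "\<forall>v\<in>F. decreasing_into Q n W v h w \<or> constant_into Q n W v h w \<or> increasing_into Q n W v h w"
proof -
  show "continues_into Q n W h w"
    unfolding continues_into_def
  proof (rule exI[of _ 1], intro conjI allI impI)
    show "\<exists>e>0. nbhd Q n (vadd w (h a)) e \<subseteq> W" if "0 < a \<and> a < 1" for a
      using nb[of a] that by blast
  qed simp
  have moves: "moves_into (s v) Q n W v h w" if "v \<in> F" for v
    unfolding moves_into_def
  proof (rule exI[of _ 1], intro conjI allI impI)
    show "\<exists>e>0. nbhd Q n (vadd w (h a)) e \<subseteq> W \<and>
        (\<forall>y\<in>nbhd Q n (vadd w (h a)) e. sgn (v y - v w) = s v)"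
      if "0 < a \<and> a < 1" for a
      using nb[of a] that \<open>v \<in> F\<close> by blast
  qed simp
  show "\<forall>v\<in>F. decreasing_into Q n W v h w \<or> constant_into Q n W v h w \<or> increasing_into Q n W v h w"
  proof
    fix v assume "v \<in> F"
    thus "decreasing_into Q n W v h w \<or> constant_into Q n W v h w \<or> increasing_into Q n W v h w"
      using moves[OF \<open>v \<in> F\<close>] s
      unfolding decreasing_into_def constant_into_def increasing_into_def by auto
  qed
qed

text \<open>The direction points to x_k for indices k with a recurring sign
  pattern.\<close>
lemma exists_sign_stable_direction:
  assumes Q: "subfield_real Q" and W: "semi_open Q n W" and w: "w \<in> W"
    and F: "finite F" "\<forall>f\<in>F. contW n W f"
  shows "\<exists>h. direction_ok Q n h \<and> continues_into Q n W h w \<and>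
     (\<forall>v\<in>F. decreasing_into Q n W v h w \<or> constant_into Q n W v h w \<or> increasing_into Q n W v h w)"
proof -
  obtain U where U: "\<And>k. U k \<noteq> {}" "\<And>k. openQ Q n (U k)"
      "\<And>k. U k \<subseteq> nbhd Q n w (1 / real (Suc k)) \<inter> W" "\<And>k. \<forall>f\<in>F. sign_uniform f (f w) (U k)"
    using sign_uniform_sequence[OF W w F] by blast
  define x where "x k = (SOME z. z \<in> U k)" for k
  have xU: "x k \<in> U k" for k using U(1)[of k] unfolding x_def by (simp add: some_in_eq)
  have sgn_values: "sgn (f y - f w) \<in> {-1, 0, 1 :: real}" for f y by (simp add: sgn_real_def)
  then obtain k0 where k0: "infinite {k. \<forall>f\<in>F. sgn (f (x k) - f w) = sgn (f (x k0) - f w)}"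
    using infinite_recurring_pattern[OF F(1), of "{-1, 0, 1}" "\<lambda>k f. sgn (f (x k) - f w)"]
    by auto
  define K where "K = {k. \<forall>f\<in>F. sgn (f (x k) - f w) = sgn (f (x k0) - f w)}"
  have K: "infinite K" "\<And>k f. k \<in> K \<Longrightarrow> f \<in> F \<Longrightarrow> sgn (f (x k) - f w) = sgn (f (x k0) - f w)"
    using k0 unfolding K_def by auto
  define sel where "sel a = (SOME k. k \<in> K \<and> 1 / real (Suc k) \<le> a)" for a :: real
  have sel: "sel a \<in> K" "1 / real (Suc (sel a)) \<le> a" if "a > 0" for a
    using someI_ex[OF infinite_small_radius[OF K(1) that]] unfolding sel_def by auto
  have wQ: "w \<in> Qvec Q n" using W w unfolding semi_open_def by blast
  have "x (sel a) \<in> Qvec Q n" "vdist n w (x (sel a)) < a" if "a > 0" for a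
    using U(3)[of "sel a"] xU[of "sel a"] sel(2)[OF that] by (auto simp: nbhd_def)
  note direction = direction_towards_points[OF Q wQ this]
  define h where "h = (\<lambda>a. if a \<le> 0 then (\<lambda>_. 0) else (\<lambda>i. x (sel a) i - w i))"
  have dir: "direction_ok Q n h" "\<And>a. a > 0 \<Longrightarrow> vadd w (h a) = x (sel a)"
    using direction unfolding h_def by blast+
  \<comment> \<open>w + h(a) = x (sel a) has a neighbourhood inside U (sel a), which lies in W and on
     which every v in F has the recurring sign.\<close>
  have nb: "\<exists>e>0. nbhd Q n (vadd w (h a)) e \<subseteq> W \<and>
          (\<forall>y\<in>nbhd Q n (vadd w (h a)) e. \<forall>v\<in>F. sgn (v y - v w) = sgn (v (x k0) - v w))"
    if "a > 0" for a
  proof -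
    obtain e where e: "e > 0" "nbhd Q n (x (sel a)) e \<subseteq> U (sel a)"
      using U(2) xU unfolding openQ_def by blast
    have "U (sel a) \<subseteq> W" using U(3) by blast
    moreover have "sgn (v y - v w) = sgn (v (x k0) - v w)" if "y \<in> U (sel a)" "v \<in> F" for y v
    proof -
      have "sgn (v y - v w) = sgn (v (x (sel a)) - v w)"
        using U(4) xU that unfolding sign_uniform_def by blast
      thus ?thesis using K(2)[OF sel(1)[OF \<open>a > 0\<close>] \<open>v \<in> F\<close>] by simp
    qed
    ultimately show ?thesis unfolding dir(2)[OF that] using e by blast
  qed
  have "\<forall>v\<in>F. sgn (v (x k0) - v w) \<in> {-1, 0, 1}" using sgn_values by blast
  note behaviour = sign_behaviour_into_direction[where h = h and s = "\<lambda>v. sgn (v (x k0) - v w)",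
      OF nb this]
  show ?thesis using dir(1) behaviour by blast
qed

section \<open>The tie-breaking policy\<close>

lemma finite_branchfuns: "finite (branchfuns T)"
  by (induction T) auto

fun fun_at :: "'l dtree \<Rightarrow> bool list \<Rightarrow> (vec \<Rightarrow> real)" where
  "fun_at (Leaf x) ps = (\<lambda>_. 0)"
| "fun_at (Node v l r) [] = v"
| "fun_at (Node v l r) (True # ps) = fun_at l ps"
| "fun_at (Node v l r) (False # ps) = fun_at r ps"

lemma ties_follow_decreasing_policy:
  assumes "\<And>pos. tb S w pos = decreasing_into Q (dim S) (wts S) (fun_at T0 pos) h w"
    and "\<And>ps. fun_at T0 (pre @ ps) = fun_at T ps"
  shows "ties_follow Q S tb w h pre T"
  using assms(2)
proof (induction T arbitrary: pre)
  case (Leaf x)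
  show ?case by simp
next
  case (Node v l r)
  have "fun_at T0 pre = v" using Node.prems[of "[]"] by simp
  moreover have "ties_follow Q S tb w h (pre @ [True]) l"
    using Node.IH(1) Node.prems[of "True # _"] by simp
  moreover have "ties_follow Q S tb w h (pre @ [False]) r"
    using Node.IH(2) Node.prems[of "False # _"] by simp
  ultimately show ?case using assms(1) by simp
qed

theorem theorem3:
  fixes Q :: "real set" and P :: "'l pstruct set" and A :: "'l pstruct \<Rightarrow> 'l dtree"
  assumes "subfield_real Q"
    and "wcop Q P"
    and "det_alg Q P A"
  shows "(\<forall>S\<in>P. \<forall>w\<in>wts S. \<exists>h. good_direction Q S (A S) w h)
       \<and> (\<exists>tb. uses_symbolic_perturbation Q P A tb)"
proof -
  have directions: "\<forall>S\<in>P. \<forall>w\<in>wts S. \<exists>h. good_direction Q S (A S) w h"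
  proof (intro ballI)
    fix S w assume S: "S \<in> P" and w: "w \<in> wts S"
    have "semi_open Q (dim S) (wts S)" "\<forall>f\<in>branchfuns (A S). contW (dim S) (wts S) f"
      using assms(2,3) S by (auto simp: wcop_def structure_ok_def det_alg_def tree_ok_def)
    thus "\<exists>h. good_direction Q S (A S) w h"
      using exists_sign_stable_direction[OF assms(1) _ w finite_branchfuns]
      unfolding good_direction_def by blast
  qed
  define H where "H S w = (SOME h. good_direction Q S (A S) w h)" for S w
  define tb :: "'l policy" where
    "tb S w pos = decreasing_into Q (dim S) (wts S) (fun_at (A S) pos) (H S w) w" for S w pos
  have "good_direction Q S (A S) w (H S w) \<and> ties_follow Q S tb w (H S w) [] (A S)"
    if "S \<in> P" "w \<in> wts S" for S w
    using someI_ex[of "good_direction Q S (A S) w"] directions that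
      ties_follow_decreasing_policy[of tb S w Q "A S" "H S w" "[]"]
    unfolding H_def tb_def by auto
  hence "uses_symbolic_perturbation Q P A tb"
    unfolding uses_symbolic_perturbation_def by blast
  with directions show ?thesis by blast
qed

end
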